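(* Assume $q\neq0$. Let $i,j,k,l,r$ be integers with $i+j=k+l$. Then $$u_ih_j-u_kh_l=q^r\left(u_{i-r}h_{j-r}-u_{k-r}h_{l-r}\right)$$ and $$u_iw_j-u_kw_l=q^r\left(u_{i-r}w_{j-r}-u_{k-r}w_{l-r}\right).$$
   Context: Let $p,q,a,b$ be complex numbers with $q\neq0$. The sequence $(u_n)$ is defined by $u_0=0$, $u_1=1$, $u_n=pu_{n-1}-qu_{n-2}$. The Horadam sequence $(w_n)$ is defined by $w_0=a$, $w_1=b$, $w_n=pw_{n-1}-qw_{n-2}$. The Horadam-Lucas sequence $(h_n)$ is defined by $h_0=2b-ap$, $h_1=bp-2aq$, $h_n=ph_{n-1}-qh_{n-2}$. All are extended to all integer indices by $x_{n-2}=(px_{n-1}-x_n)/q$. *)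

theory Defs
  imports Complex_Main
begin

fun seq_pos :: "complex \<Rightarrow> complex \<Rightarrow> complex \<Rightarrow> complex \<Rightarrow> nat \<Rightarrow> complex" where
  "seq_pos p q a b 0 = a"
| "seq_pos p q a b (Suc 0) = b"
| "seq_pos p q a b (Suc (Suc n)) = p * seq_pos p q a b (Suc n) - q * seq_pos p q a b n"

text \<open>seq_neg p q a b n is the value at index -n.\<close>
fun seq_neg :: "complex \<Rightarrow> complex \<Rightarrow> complex \<Rightarrow> complex \<Rightarrow> nat \<Rightarrow> complex" where
  "seq_neg p q a b 0 = a"
| "seq_neg p q a b (Suc 0) = (p * a - b) / q"
| "seq_neg p q a b (Suc (Suc n)) = (p * seq_neg p q a b (Suc n) - seq_neg p q a b n) / q"

definition lin_seq :: "complex \<Rightarrow> complex \<Rightarrow> complex \<Rightarrow> complex \<Rightarrow> int \<Rightarrow> complex" where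
  "lin_seq p q a b n = (if 0 \<le> n then seq_pos p q a b (nat n) else seq_neg p q a b (nat (- n)))"

definition u_seq :: "complex \<Rightarrow> complex \<Rightarrow> int \<Rightarrow> complex" where
  "u_seq p q = lin_seq p q 0 1"

definition horadam :: "complex \<Rightarrow> complex \<Rightarrow> complex \<Rightarrow> complex \<Rightarrow> int \<Rightarrow> complex" where
  "horadam p q a b = lin_seq p q a b"

definition horadam_lucas :: "complex \<Rightarrow> complex \<Rightarrow> complex \<Rightarrow> complex \<Rightarrow> int \<Rightarrow> complex" where
  "horadam_lucas p q a b = lin_seq p q (2 * b - a * p) (b * p - 2 * a * q)"

end

theory Submission
  imports Defs
begin

text \<open>For any two solutions u, x of the recurrence x_{n+2} = p x_{n+1} - q x_n the cross term
  u_i x_j - q u_{i-1} x_{j-1} depends only on i + j: moving one unit from j to i and applying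
  the recurrence once to u and once to x leaves it unchanged. Taking the difference of two such
  terms with the same index sum gives the identity for r = 1, and iterating it in both directions
  gives it for every integer r.\<close>

lemma lin_seq_rec:
  assumes "q \<noteq> 0"
  shows "lin_seq p q a b (n + 2) = p * lin_seq p q a b (n + 1) - q * lin_seq p q a b n"
proof (cases "n \<ge> 0")
  case True
  then obtain k where "n = int k" by (metis nonneg_eq_int)
  moreover have "nat (int k + 2) = Suc (Suc k)" "nat (int k + 1) = Suc k" by auto
  ultimately show ?thesis by (simp add: lin_seq_def)
next
  case False
  show ?thesis
  proof (cases "n = -1")
    case True
    then show ?thesis using assms by (simp add: lin_seq_def field_simps)
  next
    case False
    define k where "k = nat (- n - 2)"
    have k: "n = - int k - 2" using \<open>\<not> n \<ge> 0\<close> False unfolding k_def by simp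
    have "lin_seq p q a b n = seq_neg p q a b (Suc (Suc k))"
      using k by (simp add: lin_seq_def nat_add_distrib del: seq_neg.simps)
    moreover have "lin_seq p q a b (n + 1) = seq_neg p q a b (Suc k)"
      using k by (simp add: lin_seq_def nat_add_distrib)
    moreover have "lin_seq p q a b (n + 2) = seq_neg p q a b k"
      using k by (simp add: lin_seq_def)
    ultimately show ?thesis using assms by (simp add: field_simps)
  qed
qed

lemma int_shift_invariant_const:
  fixes f :: "int \<Rightarrow> 'a"
  assumes "\<And>n. f (n + 1) = f n"
  shows "f m = f 0"
proof (induction m rule: int_induct[where k = 0])
  case (step2 i)
  then show ?case using assms[of "i - 1"] by simp
qed (simp_all add: assms)

lemma recurrence_cross_term_shift:
  fixes u x :: "int \<Rightarrow> 'a :: comm_ring"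
  assumes ru: "\<And>n. u (n + 2) = p * u (n + 1) - q * u n"
    and rx: "\<And>n. x (n + 2) = p * x (n + 1) - q * x n"
  shows "u (i + 1) * x (j - 1) - q * u i * x (j - 2) = u i * x j - q * u (i - 1) * x (j - 1)"
proof -
  have hu: "u (i + 1) = p * u i - q * u (i - 1)" using ru[of "i - 1"] by (simp add: add.commute)
  have hx: "x j = p * x (j - 1) - q * x (j - 2)" using rx[of "j - 2"] by simp
  show ?thesis unfolding hu hx by (simp add: algebra_simps)
qed

lemma recurrence_cross_term_eq:
  fixes u x :: "int \<Rightarrow> 'a :: comm_ring"
  assumes ru: "\<And>n. u (n + 2) = p * u (n + 1) - q * u n"
    and rx: "\<And>n. x (n + 2) = p * x (n + 1) - q * x n"
    and "i + j = k + l"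
  shows "u i * x j - q * u (i - 1) * x (j - 1) = u k * x l - q * u (k - 1) * x (l - 1)"
proof -
  define f where "f n = u (i + n) * x (j - n) - q * u (i + n - 1) * x (j - n - 1)" for n
  have "f (n + 1) = f n" for n
    using recurrence_cross_term_shift[OF ru rx, of "i + n" "j - n"]
    by (simp add: f_def algebra_simps)
  then have "f (k - i) = f 0" by (rule int_shift_invariant_const)
  moreover have "j - (k - i) = l" using assms(3) by simp
  ultimately show ?thesis by (simp add: f_def)
qed

lemma recurrence_product_difference_step:
  fixes u x :: "int \<Rightarrow> 'a :: comm_ring"
  assumes ru: "\<And>n. u (n + 2) = p * u (n + 1) - q * u n"
    and rx: "\<And>n. x (n + 2) = p * x (n + 1) - q * x n"
    and "i + j = k + l"
  shows "u i * x j - u k * x l = q * (u (i - 1) * x (j - 1) - u (k - 1) * x (l - 1))"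
  using recurrence_cross_term_eq[OF ru rx assms(3)] by (simp add: algebra_simps)

lemma recurrence_product_difference:
  fixes u x :: "int \<Rightarrow> 'a :: field"
  assumes "q \<noteq> 0"
    and ru: "\<And>n. u (n + 2) = p * u (n + 1) - q * u n"
    and rx: "\<And>n. x (n + 2) = p * x (n + 1) - q * x n"
    and "i + j = k + l"
  shows "u i * x j - u k * x l = q powi r * (u (i - r) * x (j - r) - u (k - r) * x (l - r))"
proof -
  define g where "g s = q powi s * (u (i - s) * x (j - s) - u (k - s) * x (l - s))" for s
  have "g (s + 1) = g s" for s
  proof -
    have "i - s + (j - s) = k - s + (l - s)" using assms(4) by simp
    from recurrence_product_difference_step[OF ru rx this]
    have "u (i - s) * x (j - s) - u (k - s) * x (l - s)
        = q * (u (i - (s + 1)) * x (j - (s + 1)) - u (k - (s + 1)) * x (l - (s + 1)))"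
      by (simp add: algebra_simps)
    moreover have "q powi (s + 1) = q powi s * q" using assms(1) by (simp add: power_int_add)
    ultimately show ?thesis by (simp add: g_def)
  qed
  then have "g r = g 0" by (rule int_shift_invariant_const)
  then show ?thesis by (simp add: g_def)
qed

theorem mainTheorem16:
  fixes p q a b :: complex and i j k l r :: int
  assumes "q \<noteq> 0" and "i + j = k + l"
  shows "(u_seq p q i * horadam_lucas p q a b j - u_seq p q k * horadam_lucas p q a b l
           = q powi r * (u_seq p q (i - r) * horadam_lucas p q a b (j - r)
                         - u_seq p q (k - r) * horadam_lucas p q a b (l - r))) \<and>
         (u_seq p q i * horadam p q a b j - u_seq p q k * horadam p q a b l
           = q powi r * (u_seq p q (i - r) * horadam p q a b (j - r)
                         - u_seq p q (k - r) * horadam p q a b (l - r)))"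
proof -
  have rec: "\<And>c d n. lin_seq p q c d (n + 2) = p * lin_seq p q c d (n + 1) - q * lin_seq p q c d n"
    using lin_seq_rec[OF assms(1)] .
  show ?thesis
    unfolding u_seq_def horadam_lucas_def horadam_def
    by (intro conjI recurrence_product_difference[OF assms(1) rec rec assms(2)])
qed

end
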